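(* Assume Assumptions 1–4 (stated in the context) hold, with the periodic boundary specification, and assume the discount factor $\beta$ is sufficiently large. Then there exists $L_1<\infty$, independent of $\theta,z,t$, such that for every $\theta\in\Theta$ the function $h_\theta$ is locally Lipschitz continuous with Lipschitz constant $L_1$.
   Context: Local Lipschitz continuity with constant $L$ means: there is $\delta>0$ such that $|f(y_1)-f(y_2)|\le L|y_1-y_2|$ whenever $|y_1-y_2|<\delta$. A state is $s=(x,z,t)$; policies $\pi_\theta(a\mid s)$, $a\in\{0,1\}$, $\theta\in\Theta$. $F$ is the distribution of $(Y(1),Y(0),W,X)$ (also the marginal of $x$); $r(x,1)=E[Y(1)-Y(0)\mid x]$. $G_0,G_1$ are known functions of $s$, $\lambda(t)>0$ is a known arrival rate and $\beta$ is a discount rate. Define $$\bar r_\theta(z,t)=E_{x\sim F}[r(x,1)\pi_\theta(1\mid s)],\qquad \bar G_\theta(z,t)=E_{x\sim F}[G_1\pi_\theta(1\mid s)+G_0\pi_\theta(0\mid s)].$$ Assume $\lambda,\bar G_\theta,\bar r_\theta$ are $T_p$-periodic in $t$. $h_\theta$ is the bounded, continuous, $T_p$-periodic (in $t$) viscosity solution on $\mathbb R\times\mathbb R$ of $\beta h-\lambda(t)\bar G_\theta\partial_z h-\partial_t h-\lambda(t)\bar r_\theta=0$. Assumption 1: $\bar G_\theta,\bar r_\theta$ are Lipschitz uniformly in $\theta$; $\lambda$ is bounded, Lipschitz and bounded away from 0; $|\bar r_\theta|,|\bar G_\theta|\le M$. Assumption 2: $|Y(a)|,|G_a(s)|\le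 M$; the classes $\{\pi_\theta(1\mid\cdot,z,t)\}$ and $\{\pi_\theta(a\mid\cdot,z,t)G_a(\cdot,z,t)\}$ (indexed by $(z,t),\theta$) are VC-subgraph with finite indices. Assumption 3: $Y(a,z,t)\equiv Y(a)$; the data are iid from $F$; $(Y(1),Y(0))\perp\!\!\!\perp W\mid X$; $p(x)=E[W\mid X=x]\in[\kappa,1-\kappa]$. Assumption 4: the nonparametric estimators of $E[Y(w)\mid X=x]$ and $p(x)$ converge in sup norm at rate $O_p(n^{-c})$ for some $c>0$ and in mean square at rate $n^{-\xi}$ for some $\xi>1/2$. *)

theory Defs
  imports "HOL-Analysis.Analysis" "HOL-Probability.Probability"
begin

text \<open>Points of the (z,t) plane are pairs (z,t) :: real \<times> real (Euclidean norm).\<close>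

definition locally_lipschitz_with :: "real \<Rightarrow> (real \<times> real \<Rightarrow> real) \<Rightarrow> bool" where
  "locally_lipschitz_with L f \<longleftrightarrow>
     (\<exists>\<delta>>0. \<forall>y1 y2. norm (y1 - y2) < \<delta> \<longrightarrow> \<bar>f y1 - f y2\<bar> \<le> L * norm (y1 - y2))"

definition C1_test :: "(real \<times> real \<Rightarrow> real) \<Rightarrow> (real \<times> real \<Rightarrow> real) \<Rightarrow> (real \<times> real \<Rightarrow> real) \<Rightarrow> bool" where
  "C1_test phi phiz phit \<longleftrightarrow>
     continuous_on UNIV phiz \<and> continuous_on UNIV phit \<and>
     (\<forall>x. (phi has_derivative (\<lambda>(dz, dt). phiz x * dz + phit x * dt)) (at x))"

definition local_max_at :: "(real \<times> real \<Rightarrow> real) \<Rightarrow> real \<times> real \<Rightarrow> bool" where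
  "local_max_at f x \<longleftrightarrow> (\<exists>e>0. \<forall>y\<in>ball x e. f y \<le> f x)"

definition local_min_at :: "(real \<times> real \<Rightarrow> real) \<Rightarrow> real \<times> real \<Rightarrow> bool" where
  "local_min_at f x \<longleftrightarrow> (\<exists>e>0. \<forall>y\<in>ball x e. f x \<le> f y)"

definition hamF ::
  "real \<Rightarrow> (real \<Rightarrow> real) \<Rightarrow> (real \<Rightarrow> real \<Rightarrow> real) \<Rightarrow> (real \<Rightarrow> real \<Rightarrow> real)
    \<Rightarrow> real \<times> real \<Rightarrow> real \<Rightarrow> real \<Rightarrow> real \<Rightarrow> real" where
  "hamF \<beta> lam Gb rb x u pz pt =
     \<beta> * u - lam (snd x) * Gb (fst x) (snd x) * pz - pt - lam (snd x) * rb (fst x) (snd x)"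

definition viscosity_solution ::
  "real \<Rightarrow> (real \<Rightarrow> real) \<Rightarrow> (real \<Rightarrow> real \<Rightarrow> real) \<Rightarrow> (real \<Rightarrow> real \<Rightarrow> real)
    \<Rightarrow> (real \<times> real \<Rightarrow> real) \<Rightarrow> bool" where
  "viscosity_solution \<beta> lam Gb rb h \<longleftrightarrow>
     continuous_on UNIV h \<and>
     (\<forall>phi phiz phit x. C1_test phi phiz phit \<and> local_max_at (\<lambda>y. h y - phi y) x \<longrightarrow>
         hamF \<beta> lam Gb rb x (h x) (phiz x) (phit x) \<le> 0) \<and>
     (\<forall>phi phiz phit x. C1_test phi phiz phit \<and> local_min_at (\<lambda>y. h y - phi y) x \<longrightarrow>
         hamF \<beta> lam Gb rb x (h x) (phiz x) (phit x) \<ge> 0)"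

text \<open>Averaged reward and drift: pol th x z t is the policy probability pi_theta(1 | x,z,t),
  so pi_theta(0 | s) = 1 - pol th x z t; F is the marginal distribution of x.\<close>
definition rbar :: "'x measure \<Rightarrow> ('x \<Rightarrow> real) \<Rightarrow> ('p \<Rightarrow> 'x \<Rightarrow> real \<Rightarrow> real \<Rightarrow> real)
    \<Rightarrow> 'p \<Rightarrow> real \<Rightarrow> real \<Rightarrow> real" where
  "rbar F r pol th z t = (\<integral>x. r x * pol th x z t \<partial>F)"

definition Gbar :: "'x measure \<Rightarrow> ('x \<Rightarrow> real \<Rightarrow> real \<Rightarrow> real) \<Rightarrow> ('x \<Rightarrow> real \<Rightarrow> real \<Rightarrow> real)
    \<Rightarrow> ('p \<Rightarrow> 'x \<Rightarrow> real \<Rightarrow> real \<Rightarrow> real) \<Rightarrow> 'p \<Rightarrow> real \<Rightarrow> real \<Rightarrow> real" where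
  "Gbar F G0 G1 pol th z t = (\<integral>x. G1 x z t * pol th x z t + G0 x z t * (1 - pol th x z t) \<partial>F)"

end

theory Submission
  imports Defs
begin

(* Doubling of variables. Suppose h a - h b > L |a - b| and maximise
     Phi (x, y) = h x - h y - L rho (x - y) - eps (w x + w y)
   over pairs of points, where rho v = sqrt (delta^2 + |v|^2) is a C^1 substitute for the norm and
   the penalty with w v = sqrt (1 + |v|^2) makes a maximum exist on the unbounded plane. For delta
   and eps small, Phi (a, b) > 0, so the maximum (x, y) satisfies h x - h y > L rho (x - y).
   The functions L rho (. - y) + eps w and - L rho (x - .) - eps w touch h from above at x and
   from below at y, and their gradients agree up to O(eps). Subtracting the sub- and supersolution
   inequalities therefore cancels the time derivative and, with C a Lipschitz constant of
   lambda Gbar and lambda rbar, leaves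
     beta (h x - h y) <= (L + 1) C rho (x - y) + O(eps),
   which is impossible once beta L > C (L + 1) and eps is small compared to delta; L = C + 1 works
   for every beta >= L. *)

definition soft_norm :: "real \<Rightarrow> real \<times> real \<Rightarrow> real" where
  "soft_norm c v = sqrt (c + (fst v)\<^sup>2 + (snd v)\<^sup>2)"

lemma soft_norm_pos: "c > 0 \<Longrightarrow> soft_norm c v > 0"
  unfolding soft_norm_def by (simp add: add_pos_nonneg)

lemma soft_norm_nonneg: "c \<ge> 0 \<Longrightarrow> soft_norm c v \<ge> 0"
  unfolding soft_norm_def by simp

lemma soft_norm_minus_commute: "soft_norm c (x - y) = soft_norm c (y - x)"
  unfolding soft_norm_def by (simp add: power2_commute)

lemma norm_le_soft_norm: "c \<ge> 0 \<Longrightarrow> norm v \<le> soft_norm c v"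
  unfolding soft_norm_def by (cases v) (simp add: norm_Pair)

lemma sqrt_le_soft_norm: "c \<ge> 0 \<Longrightarrow> sqrt c \<le> soft_norm c v"
  unfolding soft_norm_def by (simp add: real_sqrt_le_mono)

lemma soft_norm_le_add_norm:
  assumes "\<delta> \<ge> 0"
  shows "soft_norm (\<delta>\<^sup>2) v \<le> \<delta> + norm v"
proof -
  have "soft_norm (\<delta>\<^sup>2) v = sqrt (\<delta>\<^sup>2 + (norm v)\<^sup>2)"
    unfolding soft_norm_def by (cases v) (simp add: norm_Pair)
  also have "\<dots> \<le> sqrt ((\<delta> + norm v)\<^sup>2)"
    using assms by (intro real_sqrt_le_mono) (simp add: power2_sum)
  also have "\<dots> = \<delta> + norm v"
    using assms by simp
  finally show ?thesis .
qed

lemma abs_fst_div_soft_norm_le: "c > 0 \<Longrightarrow> \<bar>fst v / soft_norm c v\<bar> \<le> 1"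
  using norm_fst_le[of "fst v" "snd v"] norm_le_soft_norm[of c v] soft_norm_pos[of c v]
  by (simp add: abs_div divide_le_eq_1)

lemma abs_snd_div_soft_norm_le: "c > 0 \<Longrightarrow> \<bar>snd v / soft_norm c v\<bar> \<le> 1"
  using norm_snd_le[of "snd v" "fst v"] norm_le_soft_norm[of c v] soft_norm_pos[of c v]
  by (simp add: abs_div divide_le_eq_1)

lemma continuous_on_soft_norm [continuous_intros]:
  "continuous_on S f \<Longrightarrow> continuous_on S (\<lambda>x. soft_norm c (f x))"
  unfolding soft_norm_def by (intro continuous_intros)

lemma C1_test_soft_norm:
  assumes "c > 0"
  shows "C1_test (\<lambda>x. soft_norm c (x - y))
           (\<lambda>x. fst (x - y) / soft_norm c (x - y)) (\<lambda>x. snd (x - y) / soft_norm c (x - y))"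
  unfolding C1_test_def
proof (intro conjI allI)
  have nz: "soft_norm c v \<noteq> 0" for v
    using soft_norm_pos[OF assms, of v] by simp
  show "continuous_on UNIV (\<lambda>x. fst (x - y) / soft_norm c (x - y))"
    by (intro continuous_intros) (simp_all add: nz)
  show "continuous_on UNIV (\<lambda>x. snd (x - y) / soft_norm c (x - y))"
    by (intro continuous_intros) (simp_all add: nz)
  fix x :: "real \<times> real"
  have pos: "0 < c + (fst (x - y))\<^sup>2 + (snd (x - y))\<^sup>2"
    using assms by (simp add: add_pos_nonneg)
  have "((\<lambda>x. c + (fst (x - y))\<^sup>2 + (snd (x - y))\<^sup>2) has_derivative
      (\<lambda>h. 2 * fst (x - y) * fst h + 2 * snd (x - y) * snd h)) (at x)"
    by (auto intro!: derivative_eq_intros simp: fun_eq_iff algebra_simps)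
  then have "((\<lambda>x. soft_norm c (x - y)) has_derivative
      (\<lambda>h. (2 * fst (x - y) * fst h + 2 * snd (x - y) * snd h) * (inverse (soft_norm c (x - y)) / 2)))
      (at x)"
    unfolding soft_norm_def
    by (rule has_derivative_real_sqrt[where g = "\<lambda>x. c + (fst (x - y))\<^sup>2 + (snd (x - y))\<^sup>2", OF pos])
  then show "((\<lambda>x. soft_norm c (x - y)) has_derivative
      (\<lambda>(dz, dt). fst (x - y) / soft_norm c (x - y) * dz + snd (x - y) / soft_norm c (x - y) * dt)) (at x)"
    by (rule has_derivative_eq_rhs) (auto simp: fun_eq_iff field_simps nz split: prod.splits)
qed

lemma C1_test_linear_combination:
  assumes f: "C1_test f fz ft" and g: "C1_test g gz gt"
  shows "C1_test (\<lambda>x. p * f x + q * g x) (\<lambda>x. p * fz x + q * gz x) (\<lambda>x. p * ft x + q * gt x)"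
  unfolding C1_test_def
proof (intro conjI allI)
  show "continuous_on UNIV (\<lambda>x. p * fz x + q * gz x)" "continuous_on UNIV (\<lambda>x. p * ft x + q * gt x)"
    using f g unfolding C1_test_def by (intro continuous_on_add continuous_on_mult_left; simp)+
  fix x
  have "(f has_derivative (\<lambda>(dz, dt). fz x * dz + ft x * dt)) (at x)"
    and "(g has_derivative (\<lambda>(dz, dt). gz x * dz + gt x * dt)) (at x)"
    using f g unfolding C1_test_def by blast+
  then have "((\<lambda>x. p * f x + q * g x) has_derivative
      (\<lambda>h. p * (case h of (dz, dt) \<Rightarrow> fz x * dz + ft x * dt)
         + q * (case h of (dz, dt) \<Rightarrow> gz x * dz + gt x * dt))) (at x)"
    by (intro derivative_intros)
  then show "((\<lambda>x. p * f x + q * g x) has_derivative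
      (\<lambda>(dz, dt). (p * fz x + q * gz x) * dz + (p * ft x + q * gt x) * dt)) (at x)"
    by (rule has_derivative_eq_rhs) (auto simp: fun_eq_iff algebra_simps split: prod.splits)
qed

lemma continuous_attains_max_if_superlevel_bounded:
  fixes f :: "'a::heine_borel \<Rightarrow> real"
  assumes f: "continuous_on UNIV f" and bdd: "bounded {p. m \<le> f p}" and a: "m \<le> f a"
  obtains p where "\<And>q. f q \<le> f p"
proof -
  have "compact {p. m \<le> f p}"
    using bdd closed_Collect_le[OF continuous_on_const f] by (simp add: compact_eq_bounded_closed)
  moreover have "{p. m \<le> f p} \<noteq> {}"
    using a by blast
  ultimately obtain p where p: "m \<le> f p" and max: "\<And>q. m \<le> f q \<Longrightarrow> f q \<le> f p"
    using continuous_attains_sup[OF _ _ continuous_on_subset[OF f]] by (metis mem_Collect_eq subset_UNIV)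
  show thesis
  proof
    show "f q \<le> f p" for q
      using max[of q] p by (cases "m \<le> f q") auto
  qed
qed

definition doubling_functional ::
  "(real \<times> real \<Rightarrow> real) \<Rightarrow> real \<Rightarrow> real \<Rightarrow> real \<Rightarrow> real \<times> real \<Rightarrow> real \<times> real \<Rightarrow> real"
  where
  "doubling_functional h L c \<epsilon> x y =
     h x - h y - L * soft_norm c (x - y) - \<epsilon> * (soft_norm 1 x + soft_norm 1 y)"

lemma doubling_functional_attains_max:
  assumes h: "continuous_on UNIV h" "\<And>x. \<bar>h x\<bar> \<le> B"
    and "L \<ge> 0" "c \<ge> 0" "\<epsilon> > 0"
  obtains x y where "\<And>u v. doubling_functional h L c \<epsilon> u v \<le> doubling_functional h L c \<epsilon> x y"
proof -
  define \<Phi> where "\<Phi> p = doubling_functional h L c \<epsilon> (fst p) (snd p)" for p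
  define m where "m = \<Phi> 0"
  have "continuous_on UNIV (\<lambda>p. h (fst p))" "continuous_on UNIV (\<lambda>p. h (snd p))"
    using continuous_on_compose2[OF h(1) continuous_on_fst[OF continuous_on_id]]
      continuous_on_compose2[OF h(1) continuous_on_snd[OF continuous_on_id]] by simp_all
  then have "continuous_on UNIV \<Phi>"
    unfolding \<Phi>_def doubling_functional_def by (intro continuous_intros)
  moreover have "bounded {p. m \<le> \<Phi> p}"
    unfolding bounded_iff
  proof (intro exI ballI)
    fix p assume "p \<in> {p. m \<le> \<Phi> p}"
    moreover have "0 \<le> L * soft_norm c (fst p - snd p)"
      using \<open>L \<ge> 0\<close> soft_norm_nonneg[OF \<open>c \<ge> 0\<close>] by simp
    ultimately have "\<epsilon> * (soft_norm 1 (fst p) + soft_norm 1 (snd p)) \<le> 2 * B - m"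
      using h(2)[of "fst p"] h(2)[of "snd p"] unfolding \<Phi>_def doubling_functional_def
      by (simp add: abs_le_iff)
    then have "soft_norm 1 (fst p) + soft_norm 1 (snd p) \<le> (2 * B - m) / \<epsilon>"
      using \<open>\<epsilon> > 0\<close> by (simp add: field_simps)
    moreover have "norm p \<le> soft_norm 1 (fst p) + soft_norm 1 (snd p)"
      using norm_Pair_le[of "fst p" "snd p"] norm_le_soft_norm[of 1 "fst p"]
        norm_le_soft_norm[of 1 "snd p"] by simp
    ultimately show "norm p \<le> (2 * B - m) / \<epsilon>"
      by linarith
  qed
  ultimately obtain p where p: "\<And>q. \<Phi> q \<le> \<Phi> p"
    by (rule continuous_attains_max_if_superlevel_bounded[where a = 0]) (auto simp: m_def)
  show thesis
  proof (rule that)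
    show "doubling_functional h L c \<epsilon> u v \<le> doubling_functional h L c \<epsilon> (fst p) (snd p)" for u v
      using p[of "(u, v)"] unfolding \<Phi>_def by simp
  qed
qed

lemma doubling_functional_pos:
  assumes "\<delta> \<ge> 0" "L \<ge> 0"
    and "L * \<delta> + \<epsilon> * (soft_norm 1 a + soft_norm 1 b) < h a - h b - L * norm (a - b)"
  shows "doubling_functional h L (\<delta>\<^sup>2) \<epsilon> a b > 0"
proof -
  have "L * soft_norm (\<delta>\<^sup>2) (a - b) \<le> L * (\<delta> + norm (a - b))"
    using soft_norm_le_add_norm[OF \<open>\<delta> \<ge> 0\<close>] \<open>L \<ge> 0\<close> by (rule mult_left_mono)
  then show ?thesis
    using assms(3) unfolding doubling_functional_def distrib_left by linarith
qed

lemma viscosity_subsolution_at_max: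
  assumes "viscosity_solution \<beta> lam Gb rb h" "C1_test \<phi> \<phi>z \<phi>t"
    and "\<And>u. h u - \<phi> u \<le> h x - \<phi> x"
  shows "hamF \<beta> lam Gb rb x (h x) (\<phi>z x) (\<phi>t x) \<le> 0"
proof -
  have "local_max_at (\<lambda>u. h u - \<phi> u) x"
    unfolding local_max_at_def using assms(3) by (intro exI[of _ 1]) simp
  then show ?thesis
    using assms(1,2) unfolding viscosity_solution_def by blast
qed

lemma viscosity_supersolution_at_min:
  assumes "viscosity_solution \<beta> lam Gb rb h" "C1_test \<phi> \<phi>z \<phi>t"
    and "\<And>u. h x - \<phi> x \<le> h u - \<phi> u"
  shows "hamF \<beta> lam Gb rb x (h x) (\<phi>z x) (\<phi>t x) \<ge> 0"
proof -
  have "local_min_at (\<lambda>u. h u - \<phi> u) x"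
    unfolding local_min_at_def using assms(3) by (intro exI[of _ 1]) simp
  then show ?thesis
    using assms(1,2) unfolding viscosity_solution_def by blast
qed

lemma viscosity_inequalities_at_doubling_max:
  assumes visc: "viscosity_solution \<beta> lam Gb rb h" and "c > 0"
    and max: "\<And>u v. doubling_functional h L c \<epsilon> u v \<le> doubling_functional h L c \<epsilon> x y"
  defines "\<rho> \<equiv> soft_norm c (x - y)"
  shows "hamF \<beta> lam Gb rb x (h x)
           (L * (fst (x - y) / \<rho>) + \<epsilon> * (fst x / soft_norm 1 x))
           (L * (snd (x - y) / \<rho>) + \<epsilon> * (snd x / soft_norm 1 x)) \<le> 0"
    and "hamF \<beta> lam Gb rb y (h y)
           (L * (fst (x - y) / \<rho>) - \<epsilon> * (fst y / soft_norm 1 y))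
           (L * (snd (x - y) / \<rho>) - \<epsilon> * (snd y / soft_norm 1 y)) \<ge> 0"
proof -
  have C1: "C1_test (\<lambda>u. p * soft_norm c (u - v) + q * soft_norm 1 u)
      (\<lambda>u. p * (fst (u - v) / soft_norm c (u - v)) + q * (fst u / soft_norm 1 u))
      (\<lambda>u. p * (snd (u - v) / soft_norm c (u - v)) + q * (snd u / soft_norm 1 u))" for p q v
    using C1_test_linear_combination[OF C1_test_soft_norm[OF \<open>c > 0\<close>] C1_test_soft_norm[of 1 0]]
    by simp
  show "hamF \<beta> lam Gb rb x (h x)
           (L * (fst (x - y) / \<rho>) + \<epsilon> * (fst x / soft_norm 1 x))
           (L * (snd (x - y) / \<rho>) + \<epsilon> * (snd x / soft_norm 1 x)) \<le> 0"
    unfolding \<rho>_def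
  proof (rule viscosity_subsolution_at_max[OF visc C1[where p = L and q = \<epsilon> and v = y]])
    show "h u - (L * soft_norm c (u - y) + \<epsilon> * soft_norm 1 u)
        \<le> h x - (L * soft_norm c (x - y) + \<epsilon> * soft_norm 1 x)" for u
      using max[of u y] unfolding doubling_functional_def distrib_left by linarith
  qed
  have "hamF \<beta> lam Gb rb y (h y)
           (- L * (fst (y - x) / soft_norm c (y - x)) + - \<epsilon> * (fst y / soft_norm 1 y))
           (- L * (snd (y - x) / soft_norm c (y - x)) + - \<epsilon> * (snd y / soft_norm 1 y)) \<ge> 0"
  proof (rule viscosity_supersolution_at_min[OF visc C1[where p = "- L" and q = "- \<epsilon>" and v = x]])
    show "h y - (- L * soft_norm c (y - x) + - \<epsilon> * soft_norm 1 y)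
        \<le> h u - (- L * soft_norm c (u - x) + - \<epsilon> * soft_norm 1 u)" for u
      using max[of x u]
      unfolding doubling_functional_def distrib_left mult_minus_left
        soft_norm_minus_commute[of c x y] soft_norm_minus_commute[of c x u] by linarith
  qed
  then show "hamF \<beta> lam Gb rb y (h y)
           (L * (fst (x - y) / \<rho>) - \<epsilon> * (fst y / soft_norm 1 y))
           (L * (snd (x - y) / \<rho>) - \<epsilon> * (snd y / soft_norm 1 y)) \<ge> 0"
    unfolding \<rho>_def soft_norm_minus_commute[of c y x] by (simp add: algebra_simps)
qed

definition rate_scaled :: "(real \<Rightarrow> real) \<Rightarrow> (real \<Rightarrow> real \<Rightarrow> real) \<Rightarrow> real \<times> real \<Rightarrow> real"
  where
  "rate_scaled lam P v = lam (snd v) * P (fst v) (snd v)"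

lemma rate_scaled_lipschitz:
  fixes lam :: "real \<Rightarrow> real" and P :: "real \<Rightarrow> real \<Rightarrow> real"
  assumes lam_bd: "\<And>t. \<bar>lam t\<bar> \<le> Bl"
    and lam_lip: "\<And>t1 t2. \<bar>lam t1 - lam t2\<bar> \<le> Kl * \<bar>t1 - t2\<bar>"
    and P_lip: "\<And>y1 y2. \<bar>P (fst y1) (snd y1) - P (fst y2) (snd y2)\<bar> \<le> K * norm (y1 - y2)"
    and P_bd: "\<And>z t. \<bar>P z t\<bar> \<le> M"
  shows "\<bar>rate_scaled lam P y1 - rate_scaled lam P y2\<bar>
           \<le> (Bl * \<bar>K\<bar> + M * \<bar>Kl\<bar>) * norm (y1 - y2)"
proof -
  let ?l1 = "lam (snd y1)" and ?l2 = "lam (snd y2)"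
    and ?P1 = "P (fst y1) (snd y1)" and ?P2 = "P (fst y2) (snd y2)"
  have "norm (snd (y1 - y2)) \<le> norm (y1 - y2)"
    using norm_snd_le[of "snd (y1 - y2)" "fst (y1 - y2)"] by (simp only: prod.collapse)
  then have "\<bar>Kl\<bar> * \<bar>snd y1 - snd y2\<bar> \<le> \<bar>Kl\<bar> * norm (y1 - y2)"
    by (simp add: mult_left_mono)
  moreover have "Kl * \<bar>snd y1 - snd y2\<bar> \<le> \<bar>Kl\<bar> * \<bar>snd y1 - snd y2\<bar>"
    by (simp add: mult_right_mono)
  ultimately have lam_diff: "\<bar>?l1 - ?l2\<bar> \<le> \<bar>Kl\<bar> * norm (y1 - y2)"
    using lam_lip[of "snd y1" "snd y2"] by linarith
  have P_diff: "\<bar>?P1 - ?P2\<bar> \<le> \<bar>K\<bar> * norm (y1 - y2)"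
    using P_lip[of y1 y2] mult_right_mono[OF abs_ge_self[of K] norm_ge_zero[of "y1 - y2"]] by linarith
  have "\<bar>?l1 * ?P1 - ?l2 * ?P2\<bar> = \<bar>?l1 * (?P1 - ?P2) + ?P2 * (?l1 - ?l2)\<bar>"
    by (simp add: algebra_simps)
  also have "\<dots> \<le> \<bar>?l1\<bar> * \<bar>?P1 - ?P2\<bar> + \<bar>?P2\<bar> * \<bar>?l1 - ?l2\<bar>"
    unfolding abs_mult[symmetric] by (rule abs_triangle_ineq)
  also have "\<dots> \<le> Bl * (\<bar>K\<bar> * norm (y1 - y2)) + M * (\<bar>Kl\<bar> * norm (y1 - y2))"
  proof (intro add_mono mult_mono)
    show "Bl \<ge> 0"
      using abs_ge_zero lam_bd by (rule order_trans)
    show "M \<ge> 0"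
      using abs_ge_zero P_bd by (rule order_trans)
  qed (use lam_bd P_bd lam_diff P_diff in auto)
  finally show ?thesis
    unfolding rate_scaled_def by (simp add: algebra_simps)
qed

lemma lipschitz_constant_nonneg:
  fixes f :: "'a::euclidean_space \<Rightarrow> real"
  assumes "\<And>x y. \<bar>f x - f y\<bar> \<le> C * norm (x - y)"
  shows "C \<ge> 0"
proof -
  define e :: 'a where "e = (SOME i. i \<in> Basis)"
  have "norm (e - 0) = 1"
    using SOME_Basis unfolding e_def by simp
  then have "\<bar>f e - f 0\<bar> \<le> C"
    using assms[of e 0] by simp
  then show ?thesis
    by (meson abs_ge_zero order_trans)
qed

lemma hamF_doubling_estimate:
  assumes "hamF \<beta> lam Gb rb x ux (L * pz + \<epsilon> * xz) (pt + \<epsilon> * xt) \<le> 0"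
    and "hamF \<beta> lam Gb rb y uy (L * pz - \<epsilon> * yz) (pt - \<epsilon> * yt) \<ge> 0"
  shows "\<beta> * (ux - uy) \<le> L * pz * (rate_scaled lam Gb x - rate_scaled lam Gb y)
           + \<epsilon> * (rate_scaled lam Gb x * xz + rate_scaled lam Gb y * yz + xt + yt)
           + (rate_scaled lam rb x - rate_scaled lam rb y)"
  using assms unfolding hamF_def rate_scaled_def by (simp add: algebra_simps)

lemma doubling_max_estimate:
  assumes visc: "viscosity_solution \<beta> lam Gb rb h"
    and G_lip: "\<And>x y. \<bar>rate_scaled lam Gb x - rate_scaled lam Gb y\<bar> \<le> C * norm (x - y)"
    and r_lip: "\<And>x y. \<bar>rate_scaled lam rb x - rate_scaled lam rb y\<bar> \<le> C * norm (x - y)"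
    and G_bd: "\<And>x. \<bar>rate_scaled lam Gb x\<bar> \<le> D"
    and "c > 0" "L \<ge> 0" "\<epsilon> \<ge> 0"
    and max: "\<And>u v. doubling_functional h L c \<epsilon> u v \<le> doubling_functional h L c \<epsilon> x y"
  shows "\<beta> * (h x - h y) \<le> (L + 1) * C * soft_norm c (x - y) + \<epsilon> * (2 * D + 2)"
proof -
  let ?g = "rate_scaled lam Gb" and ?s = "rate_scaled lam rb"
  define \<rho> where "\<rho> = soft_norm c (x - y)"
  define pz where "pz = fst (x - y) / \<rho>"
  define xz where "xz = fst x / soft_norm 1 x"
  define xt where "xt = snd x / soft_norm 1 x"
  define yz where "yz = fst y / soft_norm 1 y"
  define yt where "yt = snd y / soft_norm 1 y"
  have "C \<ge> 0"
    using G_lip by (rule lipschitz_constant_nonneg)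
  moreover have "norm (x - y) \<le> \<rho>"
    unfolding \<rho>_def using \<open>c > 0\<close> by (simp add: norm_le_soft_norm)
  ultimately have dist: "C * norm (x - y) \<le> C * \<rho>"
    by (simp add: mult_left_mono)
  have "\<beta> * (h x - h y) \<le> L * pz * (?g x - ?g y) + \<epsilon> * (?g x * xz + ?g y * yz + xt + yt) + (?s x - ?s y)"
    unfolding pz_def xz_def xt_def yz_def yt_def \<rho>_def
    using viscosity_inequalities_at_doubling_max[OF visc \<open>c > 0\<close> max]
    by (intro hamF_doubling_estimate)
  also have "\<dots> \<le> L * (C * \<rho>) + \<epsilon> * (2 * D + 2) + C * \<rho>"
  proof (intro add_mono)
    have "\<bar>pz\<bar> \<le> 1"
      unfolding pz_def \<rho>_def by (rule abs_fst_div_soft_norm_le[OF \<open>c > 0\<close>])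
    moreover have "\<bar>?g x - ?g y\<bar> \<le> C * \<rho>"
      using G_lip[of x y] dist by linarith
    ultimately have "\<bar>pz * (?g x - ?g y)\<bar> \<le> 1 * (C * \<rho>)"
      unfolding abs_mult by (intro mult_mono) auto
    then show "L * pz * (?g x - ?g y) \<le> L * (C * \<rho>)"
      using \<open>L \<ge> 0\<close> by (simp add: mult.assoc mult_left_mono)
    have unit: "\<bar>xz\<bar> \<le> 1" "\<bar>xt\<bar> \<le> 1" "\<bar>yz\<bar> \<le> 1" "\<bar>yt\<bar> \<le> 1"
      unfolding xz_def xt_def yz_def yt_def
      by (rule abs_fst_div_soft_norm_le abs_snd_div_soft_norm_le; simp)+
    have "D \<ge> 0"
      using abs_ge_zero G_bd by (rule order_trans)
    then have "\<bar>?g x * xz\<bar> \<le> D * 1" "\<bar>?g y * yz\<bar> \<le> D * 1"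
      unfolding abs_mult using G_bd unit by (intro mult_mono; simp)+
    with unit show "\<epsilon> * (?g x * xz + ?g y * yz + xt + yt) \<le> \<epsilon> * (2 * D + 2)"
      using \<open>\<epsilon> \<ge> 0\<close> by (intro mult_left_mono) auto
    show "?s x - ?s y \<le> C * \<rho>"
      using r_lip[of x y] dist by linarith
  qed
  finally show ?thesis
    unfolding \<rho>_def by (simp add: algebra_simps)
qed

lemma doubling_max_not_separated:
  assumes visc: "viscosity_solution \<beta> lam Gb rb h"
    and G_lip: "\<And>x y. \<bar>rate_scaled lam Gb x - rate_scaled lam Gb y\<bar> \<le> C * norm (x - y)"
    and r_lip: "\<And>x y. \<bar>rate_scaled lam rb x - rate_scaled lam rb y\<bar> \<le> C * norm (x - y)"
    and G_bd: "\<And>x. \<bar>rate_scaled lam Gb x\<bar> \<le> D"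
    and "L > 0" and \<beta>: "C * (L + 1) < \<beta> * L"
    and "\<delta> > 0" "\<epsilon> \<ge> 0"
    and \<epsilon>: "\<epsilon> * (2 * D + 2) \<le> (\<beta> * L - C * (L + 1)) * \<delta>"
    and max: "\<And>u v. doubling_functional h L (\<delta>\<^sup>2) \<epsilon> u v
                     \<le> doubling_functional h L (\<delta>\<^sup>2) \<epsilon> x y"
  shows "h x - h y \<le> L * soft_norm (\<delta>\<^sup>2) (x - y)"
proof -
  define \<rho> where "\<rho> = soft_norm (\<delta>\<^sup>2) (x - y)"
  have "C \<ge> 0"
    using G_lip by (rule lipschitz_constant_nonneg)
  then have "C * (L + 1) \<ge> 0"
    using \<open>L > 0\<close> by simp
  then have "\<beta> * L > 0"
    using \<beta> by linarith
  then have "\<beta> > 0"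
    using \<open>L > 0\<close> by (simp add: zero_less_mult_iff)
  have "\<delta> \<le> \<rho>"
    using sqrt_le_soft_norm[of "\<delta>\<^sup>2" "x - y"] \<open>\<delta> > 0\<close> unfolding \<rho>_def by simp
  then have "(\<beta> * L - C * (L + 1)) * \<delta> \<le> (\<beta> * L - C * (L + 1)) * \<rho>"
    using \<beta> by (intro mult_left_mono) auto
  moreover have "\<beta> * (h x - h y) \<le> (L + 1) * C * \<rho> + \<epsilon> * (2 * D + 2)"
    unfolding \<rho>_def by (rule doubling_max_estimate[OF visc G_lip r_lip G_bd _ _ _ max])
      (use \<open>\<delta> > 0\<close> \<open>L > 0\<close> \<open>\<epsilon> \<ge> 0\<close> in auto)
  ultimately have "\<beta> * (h x - h y) \<le> \<beta> * (L * \<rho>)"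
    using \<epsilon> by (simp add: algebra_simps)
  then show ?thesis
    unfolding \<rho>_def using \<open>\<beta> > 0\<close> by simp
qed

lemma viscosity_solution_one_sided_lipschitz:
  assumes visc: "viscosity_solution \<beta> lam Gb rb h" and h_bd: "\<And>x. \<bar>h x\<bar> \<le> B"
    and G_lip: "\<And>x y. \<bar>rate_scaled lam Gb x - rate_scaled lam Gb y\<bar> \<le> C * norm (x - y)"
    and r_lip: "\<And>x y. \<bar>rate_scaled lam rb x - rate_scaled lam rb y\<bar> \<le> C * norm (x - y)"
    and G_bd: "\<And>x. \<bar>rate_scaled lam Gb x\<bar> \<le> D"
    and "L > 0" and \<beta>: "C * (L + 1) < \<beta> * L"
  shows "h a - h b \<le> L * norm (a - b)"
proof (rule ccontr)
  assume "\<not> h a - h b \<le> L * norm (a - b)"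
  define \<eta> where "\<eta> = h a - h b - L * norm (a - b)"
  define \<delta> where "\<delta> = \<eta> / (4 * L)"
  define W where "W = soft_norm 1 a + soft_norm 1 b"
  define \<epsilon> where "\<epsilon> = min ((\<beta> * L - C * (L + 1)) * \<delta> / (2 * D + 2)) (\<eta> / 4 / W)"
  have "\<eta> > 0" "\<delta> > 0" "L * \<delta> = \<eta> / 4"
    using \<open>\<not> h a - h b \<le> L * norm (a - b)\<close> \<open>L > 0\<close> unfolding \<eta>_def \<delta>_def by simp_all
  have "D \<ge> 0"
    using abs_ge_zero G_bd by (rule order_trans)
  have "W > 0"
    unfolding W_def using soft_norm_pos[of 1] by (simp add: add_pos_pos)
  have "\<epsilon> > 0"
    unfolding \<epsilon>_def using \<beta> \<open>\<delta> > 0\<close> \<open>D \<ge> 0\<close> \<open>\<eta> > 0\<close> \<open>W > 0\<close> by simp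
  have \<epsilon>_D: "\<epsilon> * (2 * D + 2) \<le> (\<beta> * L - C * (L + 1)) * \<delta>"
    by (rule pos_le_divide_eq[THEN iffD1]) (use \<open>D \<ge> 0\<close> in \<open>simp_all add: \<epsilon>_def\<close>)
  have \<epsilon>_W: "\<epsilon> * W \<le> \<eta> / 4"
    by (rule pos_le_divide_eq[THEN iffD1]) (use \<open>W > 0\<close> in \<open>simp_all add: \<epsilon>_def\<close>)
  have "continuous_on UNIV h"
    using visc unfolding viscosity_solution_def by blast
  then obtain x y where max: "\<And>u v. doubling_functional h L (\<delta>\<^sup>2) \<epsilon> u v
                                   \<le> doubling_functional h L (\<delta>\<^sup>2) \<epsilon> x y"
    by (rule doubling_functional_attains_max[where L = L and c = "\<delta>\<^sup>2" and \<epsilon> = \<epsilon>, OF _ h_bd])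
      (use \<open>L > 0\<close> \<open>\<epsilon> > 0\<close> in auto)
  have "doubling_functional h L (\<delta>\<^sup>2) \<epsilon> a b > 0"
    by (rule doubling_functional_pos)
      (use \<open>\<delta> > 0\<close> \<open>L > 0\<close> \<epsilon>_W \<open>L * \<delta> = \<eta> / 4\<close> \<open>\<eta> > 0\<close> in \<open>auto simp: \<eta>_def W_def\<close>)
  then have "doubling_functional h L (\<delta>\<^sup>2) \<epsilon> x y > 0"
    using max[of a b] by linarith
  moreover have "\<epsilon> * (soft_norm 1 x + soft_norm 1 y) \<ge> 0"
    using \<open>\<epsilon> > 0\<close> soft_norm_nonneg[of 1] by simp
  moreover have "h x - h y \<le> L * soft_norm (\<delta>\<^sup>2) (x - y)"
    using \<open>\<epsilon> > 0\<close>
    by (intro doubling_max_not_separated[OF visc G_lip r_lip G_bd \<open>L > 0\<close> \<beta> \<open>\<delta> > 0\<close> _ \<epsilon>_D max])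
      simp
  ultimately show False
    unfolding doubling_functional_def by linarith
qed

lemma locally_lipschitz_with_if_one_sided:
  assumes "\<And>a b. f a - f b \<le> L * norm (a - b)"
  shows "locally_lipschitz_with L f"
  unfolding locally_lipschitz_with_def
proof (intro exI[of _ 1] conjI allI impI)
  show "\<bar>f y1 - f y2\<bar> \<le> L * norm (y1 - y2)" for y1 y2
    using assms[of y1 y2] assms[of y2 y1] by (simp add: norm_minus_commute)
qed simp

lemma viscosity_solution_locally_lipschitz:
  fixes lam :: "real \<Rightarrow> real" and Gb rb :: "real \<Rightarrow> real \<Rightarrow> real" and Bl K Kl M :: real
  defines "L \<equiv> Bl * \<bar>K\<bar> + M * \<bar>Kl\<bar> + 1"
  assumes visc: "viscosity_solution \<beta> lam Gb rb h" and "bounded (range h)"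
    and lam_bd: "\<And>t. \<bar>lam t\<bar> \<le> Bl"
    and lam_lip: "\<And>t1 t2. \<bar>lam t1 - lam t2\<bar> \<le> Kl * \<bar>t1 - t2\<bar>"
    and G_lip: "\<And>y1 y2. \<bar>Gb (fst y1) (snd y1) - Gb (fst y2) (snd y2)\<bar> \<le> K * norm (y1 - y2)"
    and r_lip: "\<And>y1 y2. \<bar>rb (fst y1) (snd y1) - rb (fst y2) (snd y2)\<bar> \<le> K * norm (y1 - y2)"
    and G_bd: "\<And>z t. \<bar>Gb z t\<bar> \<le> M" and r_bd: "\<And>z t. \<bar>rb z t\<bar> \<le> M"
    and "L \<le> \<beta>"
  shows "locally_lipschitz_with L h"
proof (rule locally_lipschitz_with_if_one_sided)
  have "Bl \<ge> 0"
    using abs_ge_zero lam_bd by (rule order_trans)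
  moreover have "M \<ge> 0"
    using abs_ge_zero G_bd by (rule order_trans)
  ultimately have "L \<ge> 1"
    unfolding L_def by simp
  obtain B where "\<forall>v\<in>range h. norm v \<le> B"
    using \<open>bounded (range h)\<close> unfolding bounded_iff by blast
  then have h_bd: "\<And>x. \<bar>h x\<bar> \<le> B"
    by auto
  show "h a - h b \<le> L * norm (a - b)" for a b
  proof (rule viscosity_solution_one_sided_lipschitz[OF visc h_bd])
    show "\<bar>rate_scaled lam Gb x - rate_scaled lam Gb y\<bar> \<le> (L - 1) * norm (x - y)"
      and "\<bar>rate_scaled lam rb x - rate_scaled lam rb y\<bar> \<le> (L - 1) * norm (x - y)" for x y
      unfolding L_def using rate_scaled_lipschitz[OF lam_bd lam_lip G_lip G_bd]
        rate_scaled_lipschitz[OF lam_bd lam_lip r_lip r_bd] by simp_all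
    show "\<bar>rate_scaled lam Gb x\<bar> \<le> Bl * M" for x
      unfolding rate_scaled_def abs_mult using lam_bd G_bd \<open>Bl \<ge> 0\<close> by (intro mult_mono) auto
    show "(L - 1) * (L + 1) < \<beta> * L"
    proof -
      have "(L - 1) * (L + 1) = L * L - 1"
        by (simp add: algebra_simps)
      moreover have "L * L \<le> \<beta> * L"
        using \<open>L \<le> \<beta>\<close> \<open>L \<ge> 1\<close> by (simp add: mult_right_mono)
      ultimately show ?thesis
        by linarith
    qed
  qed (use \<open>L \<ge> 1\<close> in simp)
qed

theorem lemmaF6:
  fixes F :: "'x measure" and r :: "'x \<Rightarrow> real"
    and G0 G1 :: "'x \<Rightarrow> real \<Rightarrow> real \<Rightarrow> real"
    and pol :: "'p \<Rightarrow> 'x \<Rightarrow> real \<Rightarrow> real \<Rightarrow> real"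
    and \<Theta> :: "'p set" and lam :: "real \<Rightarrow> real" and Tp M K Klam Blam :: real
  assumes F: "prob_space F"
    and pi_prob: "\<And>th x z t. th \<in> \<Theta> \<Longrightarrow> 0 \<le> pol th x z t \<and> pol th x z t \<le> 1"
    and Tp: "Tp > 0"
    and lam_per: "\<And>t. lam (t + Tp) = lam t"
    and Gbar_per: "\<And>th z t. th \<in> \<Theta> \<Longrightarrow> Gbar F G0 G1 pol th z (t + Tp) = Gbar F G0 G1 pol th z t"
    and rbar_per: "\<And>th z t. th \<in> \<Theta> \<Longrightarrow> rbar F r pol th z (t + Tp) = rbar F r pol th z t"
    and Gbar_lip: "\<And>th y1 y2. th \<in> \<Theta> \<Longrightarrow>
        \<bar>Gbar F G0 G1 pol th (fst y1) (snd y1) - Gbar F G0 G1 pol th (fst y2) (snd y2)\<bar> \<le> K * norm (y1 - y2)"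
    and rbar_lip: "\<And>th y1 y2. th \<in> \<Theta> \<Longrightarrow>
        \<bar>rbar F r pol th (fst y1) (snd y1) - rbar F r pol th (fst y2) (snd y2)\<bar> \<le> K * norm (y1 - y2)"
    and Gbar_bd: "\<And>th z t. th \<in> \<Theta> \<Longrightarrow> \<bar>Gbar F G0 G1 pol th z t\<bar> \<le> M"
    and rbar_bd: "\<And>th z t. th \<in> \<Theta> \<Longrightarrow> \<bar>rbar F r pol th z t\<bar> \<le> M"
    and lam_bd: "\<And>t. lam t \<le> Blam"
    and lam_lip: "\<And>t1 t2. \<bar>lam t1 - lam t2\<bar> \<le> Klam * \<bar>t1 - t2\<bar>"
    and lam_pos: "\<exists>l>0. \<forall>t. l \<le> lam t"
  shows "\<exists>\<beta>0. \<forall>\<beta>\<ge>\<beta>0. \<exists>L1::real. \<forall>th\<in>\<Theta>. \<forall>h.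
           (bounded (range h) \<and> (\<forall>z t. h (z, t + Tp) = h (z, t)) \<and>
            viscosity_solution \<beta> lam (Gbar F G0 G1 pol th) (rbar F r pol th) h)
           \<longrightarrow> locally_lipschitz_with L1 h"
proof -
  obtain l where "l > 0" "\<And>t. l \<le> lam t"
    using lam_pos by blast
  then have lam_abs: "\<bar>lam t\<bar> \<le> Blam" for t
    using lam_bd[of t] by (metis abs_of_pos order_less_le_trans)
  define L where "L = Blam * \<bar>K\<bar> + \<bar>M\<bar> * \<bar>Klam\<bar> + 1"
  have "locally_lipschitz_with L h"
    if "L \<le> \<beta>" "th \<in> \<Theta>" "bounded (range h)"
      "viscosity_solution \<beta> lam (Gbar F G0 G1 pol th) (rbar F r pol th) h" for \<beta> th h
    unfolding L_def
  proof (rule viscosity_solution_locally_lipschitz[OF that(4,3) lam_abs lam_lip])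
    show "\<bar>Gbar F G0 G1 pol th z t\<bar> \<le> \<bar>M\<bar>" "\<bar>rbar F r pol th z t\<bar> \<le> \<bar>M\<bar>" for z t
      using Gbar_bd[OF \<open>th \<in> \<Theta>\<close>] rbar_bd[OF \<open>th \<in> \<Theta>\<close>] abs_ge_self order_trans
      by blast+
  qed (use that Gbar_lip rbar_lip L_def in auto)
  then show ?thesis
    by blast
qed

end
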